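(* Let $(M_i)_{i\in I}$ be a family of sofic monoids (indexed by an arbitrary set $I$). Then the product monoid $\prod_{i\in I} M_i$ (with componentwise multiplication) is sofic.
   Context: For a non-empty finite set $X$, $\mathrm{Map}(X)$ is the monoid of all maps $X\to X$ under composition (identity $\mathrm{Id}_X$) with the Hamming metric $d_X(f,g)=|\{x\in X : f(x)\ne g(x)\}|/|X|$. For a monoid $M$, finite $K\subset M$ and $\varepsilon,\alpha>0$, a map $\varphi\colon M\to\mathrm{Map}(X)$ is a $(K,\varepsilon)$-morphism if $d_X(\varphi(k_1k_2),\varphi(k_1)\varphi(k_2))\le\varepsilon$ for all $k_1,k_2\in K$ and $d_X(\varphi(1_M),\mathrm{Id}_X)\le\varepsilon$; it is $(K,\alpha)$-injective if $d_X(\varphi(k_1),\varphi(k_2))\ge\alpha$ for all distinct $k_1,k_2\in K$. $M$ is sofic if for every finite $K\subset M$ and every $\varepsilon>0$ there exist a non-empty finite set $X$ and a $(K,1-\varepsilon)$-injective $(K,\varepsilon)$-morphism $\varphi\colon M\to\mathrm{Map}(X)$. *)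

theory Defs
  imports Complex_Main "HOL-Algebra.Group" "HOL-Library.FuncSet"
begin

definition hamming :: "'x set \<Rightarrow> ('x \<Rightarrow> 'x) \<Rightarrow> ('x \<Rightarrow> 'x) \<Rightarrow> real" where
  "hamming X f g = real (card {x \<in> X. f x \<noteq> g x}) / real (card X)"

definition approx_morphism ::
  "('a, 'b) monoid_scheme \<Rightarrow> 'x set \<Rightarrow> 'a set \<Rightarrow> real \<Rightarrow> ('a \<Rightarrow> 'x \<Rightarrow> 'x) \<Rightarrow> bool" where
  "approx_morphism M X K \<epsilon> \<phi> \<longleftrightarrow>
     (\<forall>m \<in> carrier M. \<phi> m \<in> X \<rightarrow> X) \<and>
     (\<forall>k1 \<in> K. \<forall>k2 \<in> K. hamming X (\<phi> (k1 \<otimes>\<^bsub>M\<^esub> k2)) (\<phi> k1 \<circ> \<phi> k2) \<le> \<epsilon>) \<and>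
     hamming X (\<phi> \<one>\<^bsub>M\<^esub>) id \<le> \<epsilon>"

definition approx_injective ::
  "'x set \<Rightarrow> 'a set \<Rightarrow> real \<Rightarrow> ('a \<Rightarrow> 'x \<Rightarrow> 'x) \<Rightarrow> bool" where
  "approx_injective X K \<alpha> \<phi> \<longleftrightarrow>
     (\<forall>k1 \<in> K. \<forall>k2 \<in> K. k1 \<noteq> k2 \<longrightarrow> hamming X (\<phi> k1) (\<phi> k2) \<ge> \<alpha>)"

text \<open>Sofic monoid. Finite sets X are taken inside nat (no loss: any finite set
  is in bijection with a finite set of naturals).\<close>
definition sofic :: "('a, 'b) monoid_scheme \<Rightarrow> bool" where
  "sofic M \<longleftrightarrow> monoid M \<and>
     (\<forall>K. K \<subseteq> carrier M \<and> finite K \<longrightarrow>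
       (\<forall>\<epsilon>::real. \<epsilon> > 0 \<longrightarrow>
         (\<exists>(X::nat set) \<phi>. finite X \<and> X \<noteq> {} \<and>
            approx_morphism M X K \<epsilon> \<phi> \<and> approx_injective X K (1 - \<epsilon>) \<phi>)))"

definition prod_monoid :: "'i set \<Rightarrow> ('i \<Rightarrow> ('a, 'b) monoid_scheme) \<Rightarrow> ('i \<Rightarrow> 'a) monoid" where
  "prod_monoid I M =
     \<lparr> carrier = (\<Pi>\<^sub>E i\<in>I. carrier (M i)),
       mult = (\<lambda>f g. \<lambda>i\<in>I. f i \<otimes>\<^bsub>M i\<^esub> g i),
       one = (\<lambda>i\<in>I. \<one>\<^bsub>M i\<^esub>) \<rparr>"

end

theory Submission
  imports Defs "HOL-Library.Nat_Bijection"
begin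

text \<open>Only finitely many coordinates are needed to separate the points of a finite set
  \<open>K\<close> of the product. For such coordinates \<open>j\<^sub>1, \<dots>, j\<^sub>n\<close>, the product of sofic
  approximations \<open>\<phi>\<^sub>i\<close> of the monoids \<open>M j\<^sub>i\<close>, acting on \<open>X\<^sub>1 \<times> \<dots> \<times> X\<^sub>n\<close> by
  \<open>m \<mapsto> \<phi>\<^sub>1 (m j\<^sub>1) \<times> \<dots> \<times> \<phi>\<^sub>n (m j\<^sub>n)\<close>, approximates the product monoid: the Hamming
  distance of a product of maps is at most the sum of the distances of the factors,
  so the multiplicativity defects add up to \<open>n \<delta>\<close>, and it is at least the distance
  of each factor, so two elements differing in some coordinate \<open>j\<^sub>i\<close> stay
  \<open>(1 - \<delta>)\<close>-apart. Taking \<open>\<delta> = \<epsilon> / (n + 1)\<close> gives the required approximation.\<close>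

text \<open>Since approximations act on sets of naturals, \<open>X \<times> Y\<close> is transported into \<open>nat\<close>
  by the Cantor pairing \<open>prod_encode\<close>.\<close>

definition encode_map_prod :: "(nat \<Rightarrow> nat) \<Rightarrow> (nat \<Rightarrow> nat) \<Rightarrow> nat \<Rightarrow> nat" where
  "encode_map_prod f g = prod_encode \<circ> map_prod f g \<circ> prod_decode"

lemma encode_map_prod_encode [simp]:
  "encode_map_prod f g (prod_encode (a, b)) = prod_encode (f a, g b)"
  by (simp add: encode_map_prod_def)

lemma encode_map_prod_comp:
  "encode_map_prod f1 f2 \<circ> encode_map_prod g1 g2 = encode_map_prod (f1 \<circ> g1) (f2 \<circ> g2)"
  by (simp add: encode_map_prod_def fun_eq_iff prod.map_comp)

lemma encode_map_prod_id [simp]: "encode_map_prod id id = id"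
  by (simp add: encode_map_prod_def fun_eq_iff prod.map_id)

lemma encode_map_prod_funcset:
  "f \<in> A \<rightarrow> A \<Longrightarrow> g \<in> B \<rightarrow> B \<Longrightarrow>
    encode_map_prod f g \<in> prod_encode ` (A \<times> B) \<rightarrow> prod_encode ` (A \<times> B)"
  by auto

lemma hamming_encode_map_prod:
  assumes "finite A" "finite B"
  shows "hamming (prod_encode ` (A \<times> B)) (encode_map_prod f1 f2) (encode_map_prod g1 g2) =
    card ({a \<in> A. f1 a \<noteq> g1 a} \<times> B \<union> A \<times> {b \<in> B. f2 b \<noteq> g2 b}) / (card A * card B)"
proof -
  have "{n \<in> prod_encode ` (A \<times> B). encode_map_prod f1 f2 n \<noteq> encode_map_prod g1 g2 n} =
      prod_encode ` ({a \<in> A. f1 a \<noteq> g1 a} \<times> B \<union> A \<times> {b \<in> B. f2 b \<noteq> g2 b})"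
    by (auto simp: prod_encode_eq)
  then show ?thesis
    by (simp add: hamming_def card_image[OF inj_prod_encode] card_cartesian_product)
qed

lemma hamming_encode_map_prod_le:
  assumes "finite A" "finite B"
  shows "hamming (prod_encode ` (A \<times> B)) (encode_map_prod f1 f2) (encode_map_prod g1 g2)
    \<le> hamming A f1 g1 + hamming B f2 g2"
proof (cases "A = {} \<or> B = {}")
  case True
  then show ?thesis by (auto simp: hamming_def)
next
  case False
  define D1 where "D1 = {a \<in> A. f1 a \<noteq> g1 a}"
  define D2 where "D2 = {b \<in> B. f2 b \<noteq> g2 b}"
  have pos: "card A > 0" "card B > 0" using False assms by auto
  have "card (D1 \<times> B \<union> A \<times> D2) \<le> card D1 * card B + card A * card D2"
    using card_Un_le[of "D1 \<times> B" "A \<times> D2"] by (simp add: card_cartesian_product)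
  then have "real (card (D1 \<times> B \<union> A \<times> D2)) / (card A * card B)
      \<le> (card D1 * card B + card A * card D2) / (card A * card B)"
    using pos by (intro divide_right_mono) (simp_all flip: of_nat_mult of_nat_add)
  also have "\<dots> = card D1 / card A + card D2 / card B"
    using pos by (simp add: field_simps)
  finally show ?thesis
    unfolding hamming_encode_map_prod[OF assms] unfolding hamming_def D1_def D2_def .
qed

lemma hamming_le_encode_map_prod_left:
  assumes "finite A" "finite B" "B \<noteq> {}"
  shows "hamming A f1 g1
    \<le> hamming (prod_encode ` (A \<times> B)) (encode_map_prod f1 f2) (encode_map_prod g1 g2)"
proof -
  define D1 where "D1 = {a \<in> A. f1 a \<noteq> g1 a}"
  define D2 where "D2 = {b \<in> B. f2 b \<noteq> g2 b}"
  have "finite (D1 \<times> B \<union> A \<times> D2)" using assms by (simp add: D1_def D2_def)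
  then have "card D1 * card B \<le> card (D1 \<times> B \<union> A \<times> D2)"
    by (metis card_mono card_cartesian_product Un_upper1)
  then have "real (card D1 * card B) / (card A * card B)
      \<le> card (D1 \<times> B \<union> A \<times> D2) / (card A * card B)"
    by (intro divide_right_mono) (simp_all only: of_nat_le_iff of_nat_0_le_iff)
  then show ?thesis
    using assms unfolding hamming_encode_map_prod[OF assms(1,2)]
    unfolding hamming_def D1_def D2_def by simp
qed

lemma hamming_le_encode_map_prod_right:
  assumes "finite A" "finite B" "A \<noteq> {}"
  shows "hamming B f2 g2
    \<le> hamming (prod_encode ` (A \<times> B)) (encode_map_prod f1 f2) (encode_map_prod g1 g2)"
proof -
  define D1 where "D1 = {a \<in> A. f1 a \<noteq> g1 a}"
  define D2 where "D2 = {b \<in> B. f2 b \<noteq> g2 b}"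
  have "finite (D1 \<times> B \<union> A \<times> D2)" using assms by (simp add: D1_def D2_def)
  then have "card A * card D2 \<le> card (D1 \<times> B \<union> A \<times> D2)"
    by (metis card_mono card_cartesian_product Un_upper2)
  then have "real (card A * card D2) / (card A * card B)
      \<le> card (D1 \<times> B \<union> A \<times> D2) / (card A * card B)"
    by (intro divide_right_mono) (simp_all only: of_nat_le_iff of_nat_0_le_iff)
  then show ?thesis
    using assms unfolding hamming_encode_map_prod[OF assms(1,2)]
    unfolding hamming_def D1_def D2_def by simp
qed

lemma approx_morphism_encode_map_prod:
  assumes phi: "approx_morphism M X K \<epsilon> \<phi>" and psi: "approx_morphism N Y (h ` K) \<epsilon>' \<psi>"
    and h: "h \<in> hom M N" "h \<one>\<^bsub>M\<^esub> = \<one>\<^bsub>N\<^esub>" and K: "K \<subseteq> carrier M"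
    and fin: "finite X" "finite Y"
  shows "approx_morphism M (prod_encode ` (X \<times> Y)) K (\<epsilon> + \<epsilon>')
    (\<lambda>m. encode_map_prod (\<phi> m) (\<psi> (h m)))"
  unfolding approx_morphism_def
proof (intro conjI ballI)
  fix m assume "m \<in> carrier M"
  then show "encode_map_prod (\<phi> m) (\<psi> (h m)) \<in> prod_encode ` (X \<times> Y) \<rightarrow> prod_encode ` (X \<times> Y)"
    using phi psi h(1) by (intro encode_map_prod_funcset) (auto simp: approx_morphism_def hom_in_carrier)
next
  fix k1 k2 assume k: "k1 \<in> K" "k2 \<in> K"
  then have "h (k1 \<otimes>\<^bsub>M\<^esub> k2) = h k1 \<otimes>\<^bsub>N\<^esub> h k2"
    using K h(1) by (auto intro: hom_mult)
  then have "hamming (prod_encode ` (X \<times> Y)) (encode_map_prod (\<phi> (k1 \<otimes>\<^bsub>M\<^esub> k2)) (\<psi> (h (k1 \<otimes>\<^bsub>M\<^esub> k2))))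
      (encode_map_prod (\<phi> k1) (\<psi> (h k1)) \<circ> encode_map_prod (\<phi> k2) (\<psi> (h k2)))
    \<le> hamming X (\<phi> (k1 \<otimes>\<^bsub>M\<^esub> k2)) (\<phi> k1 \<circ> \<phi> k2)
      + hamming Y (\<psi> (h k1 \<otimes>\<^bsub>N\<^esub> h k2)) (\<psi> (h k1) \<circ> \<psi> (h k2))"
    using fin by (simp add: encode_map_prod_comp hamming_encode_map_prod_le)
  also have "\<dots> \<le> \<epsilon> + \<epsilon>'"
    using phi psi k by (intro add_mono) (auto simp: approx_morphism_def)
  finally show "hamming (prod_encode ` (X \<times> Y)) (encode_map_prod (\<phi> (k1 \<otimes>\<^bsub>M\<^esub> k2)) (\<psi> (h (k1 \<otimes>\<^bsub>M\<^esub> k2))))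
      (encode_map_prod (\<phi> k1) (\<psi> (h k1)) \<circ> encode_map_prod (\<phi> k2) (\<psi> (h k2))) \<le> \<epsilon> + \<epsilon>'" .
next
  have "hamming (prod_encode ` (X \<times> Y)) (encode_map_prod (\<phi> \<one>\<^bsub>M\<^esub>) (\<psi> (h \<one>\<^bsub>M\<^esub>))) id
      \<le> hamming X (\<phi> \<one>\<^bsub>M\<^esub>) id + hamming Y (\<psi> \<one>\<^bsub>N\<^esub>) id"
    using fin hamming_encode_map_prod_le[of X Y _ _ id id] by (simp add: h(2))
  also have "\<dots> \<le> \<epsilon> + \<epsilon>'"
    using phi psi by (intro add_mono) (auto simp: approx_morphism_def)
  finally show "hamming (prod_encode ` (X \<times> Y)) (encode_map_prod (\<phi> \<one>\<^bsub>M\<^esub>) (\<psi> (h \<one>\<^bsub>M\<^esub>))) id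
      \<le> \<epsilon> + \<epsilon>'" .
qed

lemma soficD:
  assumes "sofic M" "K \<subseteq> carrier M" "finite K" "\<epsilon> > 0"
  obtains X :: "nat set" and \<phi> where "finite X" "X \<noteq> {}" "approx_morphism M X K \<epsilon> \<phi>"
    "approx_injective X K (1 - \<epsilon>) \<phi>"
  using assms unfolding sofic_def by blast

lemma exists_approx_morphism_separating:
  fixes N :: "'j \<Rightarrow> ('n, 'c) monoid_scheme" and h :: "'j \<Rightarrow> 'm \<Rightarrow> 'n" and \<delta> :: real
  assumes "finite J" and sofic: "\<forall>j\<in>J. sofic (N j)"
    and homs: "\<forall>j\<in>J. h j \<in> hom M (N j) \<and> h j \<one>\<^bsub>M\<^esub> = \<one>\<^bsub>N j\<^esub>"
    and K: "K \<subseteq> carrier M" "finite K" and "\<delta> > 0"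
  obtains X :: "nat set" and \<phi> where "finite X" "X \<noteq> {}" "approx_morphism M X K (card J * \<delta>) \<phi>"
    "\<forall>k1\<in>K. \<forall>k2\<in>K. \<forall>j\<in>J. h j k1 \<noteq> h j k2 \<longrightarrow> 1 - \<delta> \<le> hamming X (\<phi> k1) (\<phi> k2)"
proof -
  have "\<exists>(X::nat set) \<phi>. finite X \<and> X \<noteq> {} \<and> approx_morphism M X K (card J * \<delta>) \<phi> \<and>
    (\<forall>k1\<in>K. \<forall>k2\<in>K. \<forall>j\<in>J. h j k1 \<noteq> h j k2 \<longrightarrow> 1 - \<delta> \<le> hamming X (\<phi> k1) (\<phi> k2))"
    using assms(1) sofic homs
  proof (induction J rule: finite_induct)
    case empty
    have "approx_morphism M {0} K 0 (\<lambda>m. id)"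
      by (simp add: approx_morphism_def hamming_def)
    then show ?case by (simp only: card.empty of_nat_0 mult_zero_left) blast
  next
    case (insert j J)
    obtain X :: "nat set" and \<phi> where X: "finite X" "X \<noteq> {}"
      and \<phi>: "approx_morphism M X K (card J * \<delta>) \<phi>"
      and sep: "\<forall>k1\<in>K. \<forall>k2\<in>K. \<forall>j\<in>J. h j k1 \<noteq> h j k2 \<longrightarrow> 1 - \<delta> \<le> hamming X (\<phi> k1) (\<phi> k2)"
    proof -
      have "\<forall>j\<in>J. sofic (N j)" "\<forall>j\<in>J. h j \<in> hom M (N j) \<and> h j \<one>\<^bsub>M\<^esub> = \<one>\<^bsub>N j\<^esub>"
        using insert.prems by simp_all
      then show thesis using insert.IH that by blast
    qed
    have hj: "h j \<in> hom M (N j)" "h j \<one>\<^bsub>M\<^esub> = \<one>\<^bsub>N j\<^esub>" using insert.prems by auto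
    have "sofic (N j)" "h j ` K \<subseteq> carrier (N j)" "finite (h j ` K)"
      using insert.prems K hj(1) by (auto intro: hom_in_carrier)
    then obtain Y :: "nat set" and \<psi> where Y: "finite Y" "Y \<noteq> {}"
      and \<psi>: "approx_morphism (N j) Y (h j ` K) \<delta> \<psi>"
      and inj: "approx_injective Y (h j ` K) (1 - \<delta>) \<psi>"
      using \<open>\<delta> > 0\<close> by (rule soficD)
    define \<chi> where "\<chi> m = encode_map_prod (\<phi> m) (\<psi> (h j m))" for m
    have fin: "finite (prod_encode ` (X \<times> Y))" "prod_encode ` (X \<times> Y) \<noteq> {}"
      using X Y by auto
    have "approx_morphism M (prod_encode ` (X \<times> Y)) K (card J * \<delta> + \<delta>) \<chi>"
      unfolding \<chi>_def using \<phi> \<psi> hj K(1) X(1) Y(1) by (rule approx_morphism_encode_map_prod)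
    moreover have "card J * \<delta> + \<delta> = card (insert j J) * \<delta>"
      using insert.hyps by (simp add: algebra_simps)
    moreover have "1 - \<delta> \<le> hamming (prod_encode ` (X \<times> Y)) (\<chi> k1) (\<chi> k2)"
      if k: "k1 \<in> K" "k2 \<in> K" and j': "j' \<in> insert j J" "h j' k1 \<noteq> h j' k2" for k1 k2 j'
    proof (cases "j' = j")
      case True
      then have "1 - \<delta> \<le> hamming Y (\<psi> (h j k1)) (\<psi> (h j k2))"
        using inj k j' unfolding approx_injective_def by blast
      also have "\<dots> \<le> hamming (prod_encode ` (X \<times> Y)) (\<chi> k1) (\<chi> k2)"
        unfolding \<chi>_def using X(1) Y(1) X(2) by (rule hamming_le_encode_map_prod_right)
      finally show ?thesis .
    next
      case False
      then have "1 - \<delta> \<le> hamming X (\<phi> k1) (\<phi> k2)"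
        using sep k j' by blast
      also have "\<dots> \<le> hamming (prod_encode ` (X \<times> Y)) (\<chi> k1) (\<chi> k2)"
        unfolding \<chi>_def using X(1) Y by (rule hamming_le_encode_map_prod_left)
      finally show ?thesis .
    qed
    ultimately show ?case
      using fin by (metis (no_types, lifting))
  qed
  then show thesis using that by blast
qed

lemma approx_morphism_mono:
  "approx_morphism M X K \<epsilon> \<phi> \<Longrightarrow> \<epsilon> \<le> \<epsilon>' \<Longrightarrow> approx_morphism M X K \<epsilon>' \<phi>"
  unfolding approx_morphism_def by (meson order_trans)

lemma sofic_if_separated_by_homs:
  fixes N :: "'j \<Rightarrow> ('n, 'c) monoid_scheme" and h :: "'j \<Rightarrow> 'm \<Rightarrow> 'n"
  assumes "monoid M" and sofic: "\<forall>j\<in>J. sofic (N j)"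
    and homs: "\<forall>j\<in>J. h j \<in> hom M (N j) \<and> h j \<one>\<^bsub>M\<^esub> = \<one>\<^bsub>N j\<^esub>"
    and separating: "\<And>K. K \<subseteq> carrier M \<Longrightarrow> finite K \<Longrightarrow>
      \<exists>J'\<subseteq>J. finite J' \<and> (\<forall>k1\<in>K. \<forall>k2\<in>K. k1 \<noteq> k2 \<longrightarrow> (\<exists>j\<in>J'. h j k1 \<noteq> h j k2))"
  shows "sofic M"
  unfolding sofic_def
proof (intro conjI allI impI)
  show "monoid M" by fact
  fix K and \<epsilon> :: real
  assume "K \<subseteq> carrier M \<and> finite K" and "\<epsilon> > 0"
  then have K: "K \<subseteq> carrier M" "finite K" by simp_all
  obtain J' where J': "J' \<subseteq> J" "finite J'"
    and sep: "\<forall>k1\<in>K. \<forall>k2\<in>K. k1 \<noteq> k2 \<longrightarrow> (\<exists>j\<in>J'. h j k1 \<noteq> h j k2)"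
    using separating[OF K] by blast
  have sofic': "\<forall>j\<in>J'. sofic (N j)"
    and homs': "\<forall>j\<in>J'. h j \<in> hom M (N j) \<and> h j \<one>\<^bsub>M\<^esub> = \<one>\<^bsub>N j\<^esub>"
    using J'(1) sofic homs by blast+
  define \<delta> where "\<delta> = \<epsilon> / (card J' + 1)"
  have "\<delta> > 0" "\<delta> \<le> \<epsilon>" "card J' * \<delta> \<le> \<epsilon>"
    using \<open>\<epsilon> > 0\<close> by (simp_all add: \<delta>_def divide_le_eq)
  obtain X :: "nat set" and \<phi> where X: "finite X" "X \<noteq> {}"
    and \<phi>: "approx_morphism M X K (card J' * \<delta>) \<phi>"
    and sep\<phi>: "\<forall>k1\<in>K. \<forall>k2\<in>K. \<forall>j\<in>J'. h j k1 \<noteq> h j k2 \<longrightarrow> 1 - \<delta> \<le> hamming X (\<phi> k1) (\<phi> k2)"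
    by (rule exists_approx_morphism_separating[OF J'(2) sofic' homs' K \<open>\<delta> > 0\<close>])
  have "approx_morphism M X K \<epsilon> \<phi>"
    using \<phi> \<open>card J' * \<delta> \<le> \<epsilon>\<close> by (rule approx_morphism_mono)
  moreover have "approx_injective X K (1 - \<epsilon>) \<phi>"
    unfolding approx_injective_def
  proof (intro ballI impI)
    fix k1 k2 assume "k1 \<in> K" "k2 \<in> K" "k1 \<noteq> k2"
    then have "1 - \<delta> \<le> hamming X (\<phi> k1) (\<phi> k2)" using sep sep\<phi> by blast
    then show "1 - \<epsilon> \<le> hamming X (\<phi> k1) (\<phi> k2)" using \<open>\<delta> \<le> \<epsilon>\<close> by linarith
  qed
  ultimately show "\<exists>(X::nat set) \<phi>. finite X \<and> X \<noteq> {} \<and>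
      approx_morphism M X K \<epsilon> \<phi> \<and> approx_injective X K (1 - \<epsilon>) \<phi>"
    using X by (intro exI conjI)
qed

lemma monoid_prod_monoid:
  assumes "\<forall>i\<in>I. monoid (M i)"
  shows "monoid (prod_monoid I M)"
proof (rule monoidI)
  fix x y assume "x \<in> carrier (prod_monoid I M)" "y \<in> carrier (prod_monoid I M)"
  then show "x \<otimes>\<^bsub>prod_monoid I M\<^esub> y \<in> carrier (prod_monoid I M)"
    using assms by (auto simp: prod_monoid_def PiE_def Pi_def monoid.m_closed)
next
  show "\<one>\<^bsub>prod_monoid I M\<^esub> \<in> carrier (prod_monoid I M)"
    using assms by (auto simp: prod_monoid_def monoid.one_closed)
next
  fix x y z
  assume "x \<in> carrier (prod_monoid I M)" "y \<in> carrier (prod_monoid I M)"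
    "z \<in> carrier (prod_monoid I M)"
  then show "x \<otimes>\<^bsub>prod_monoid I M\<^esub> y \<otimes>\<^bsub>prod_monoid I M\<^esub> z =
      x \<otimes>\<^bsub>prod_monoid I M\<^esub> (y \<otimes>\<^bsub>prod_monoid I M\<^esub> z)"
    using assms by (auto simp: prod_monoid_def PiE_def Pi_def monoid.m_assoc)
next
  fix x assume "x \<in> carrier (prod_monoid I M)"
  then show "\<one>\<^bsub>prod_monoid I M\<^esub> \<otimes>\<^bsub>prod_monoid I M\<^esub> x = x"
    and "x \<otimes>\<^bsub>prod_monoid I M\<^esub> \<one>\<^bsub>prod_monoid I M\<^esub> = x"
    using assms by (auto simp: prod_monoid_def PiE_def Pi_def extensional_def)
qed

lemma prod_monoid_projection_hom:
  assumes "j \<in> I"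
  shows "(\<lambda>m. m j) \<in> hom (prod_monoid I M) (M j)"
    and "\<one>\<^bsub>prod_monoid I M\<^esub> j = \<one>\<^bsub>M j\<^esub>"
  using assms by (auto simp: prod_monoid_def intro!: homI)

lemma finite_separating_coordinates:
  assumes "K \<subseteq> (\<Pi>\<^sub>E i\<in>I. A i)" "finite K"
  shows "\<exists>J\<subseteq>I. finite J \<and> (\<forall>k1\<in>K. \<forall>k2\<in>K. k1 \<noteq> k2 \<longrightarrow> (\<exists>j\<in>J. k1 j \<noteq> k2 j))"
proof -
  let ?D = "{p \<in> K \<times> K. fst p \<noteq> snd p}"
  have "\<forall>p\<in>?D. \<exists>i. i \<in> I \<and> fst p i \<noteq> snd p i"
  proof
    fix p assume p: "p \<in> ?D"
    show "\<exists>i. i \<in> I \<and> fst p i \<noteq> snd p i"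
    proof (rule ccontr)
      assume differ: "\<not> ?thesis"
      have "fst p \<in> K" "snd p \<in> K" using p by auto
      then have "fst p = snd p"
        by (rule PiE_ext[OF subsetD[OF assms(1)] subsetD[OF assms(1)]]) (use differ in blast)
      with p show False by simp
    qed
  qed
  then obtain sel where sel: "\<forall>p\<in>?D. sel p \<in> I \<and> fst p (sel p) \<noteq> snd p (sel p)"
    by (rule bchoice[THEN exE])
  have "\<exists>j\<in>sel ` ?D. k1 j \<noteq> k2 j" if "k1 \<in> K" "k2 \<in> K" "k1 \<noteq> k2" for k1 k2
  proof -
    have "(k1, k2) \<in> ?D" using that by simp
    then show ?thesis using sel by (intro bexI[of _ "sel (k1, k2)"] imageI) auto
  qed
  moreover have "sel ` ?D \<subseteq> I" "finite (sel ` ?D)" using sel assms(2) by auto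
  ultimately show ?thesis by blast
qed

theorem proposition3p7:
  fixes I :: "'i set" and M :: "'i \<Rightarrow> ('a, 'b) monoid_scheme"
  assumes "\<forall>i \<in> I. sofic (M i)"
  shows "sofic (prod_monoid I M)"
proof (rule sofic_if_separated_by_homs[where h = "\<lambda>j m. m j"])
  show "monoid (prod_monoid I M)"
    using assms by (intro monoid_prod_monoid) (auto simp: sofic_def)
  show "\<forall>j\<in>I. sofic (M j)" by fact
  show "\<forall>j\<in>I. (\<lambda>m. m j) \<in> hom (prod_monoid I M) (M j) \<and> \<one>\<^bsub>prod_monoid I M\<^esub> j = \<one>\<^bsub>M j\<^esub>"
    by (simp add: prod_monoid_projection_hom)
  fix K assume "K \<subseteq> carrier (prod_monoid I M)" "finite K"
  then show "\<exists>J\<subseteq>I. finite J \<and> (\<forall>k1\<in>K. \<forall>k2\<in>K. k1 \<noteq> k2 \<longrightarrow> (\<exists>j\<in>J. k1 j \<noteq> k2 j))"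
    by (intro finite_separating_coordinates) (simp_all add: prod_monoid_def)
qed

end
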